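(* Let $\epsilon>0$ and suppose $h\in\operatorname{Isom}^0(\mathbb{E})$ is an $\epsilon$-hyperbolic affine isometry with linear part $g$. Then for all $\delta>0$ and all $x\in\mathbb{E}$, $$B\!\left(h(x),\frac{\delta\epsilon}{4}\right)\cap E^{wu}_{h(x)}(g)\subset h\big(B(x,\delta)\big).$$
   Context: $\mathbb{R}^{2,1}$ is $\mathbb{R}^3$ with $\mathbb{B}(u,v)=u_1v_1+u_2v_2-u_3v_3$; $\mathbb{E}$ is the affine space modelled on it; $\operatorname{Isom}^0(\mathbb{E})$ consists of maps $x\mapsto gx+b$ with $g\in\mathrm{SO}^0(2,1)$ (the linear part). $\rho$ is Euclidean distance and $B(x,\delta)$ the open Euclidean ball. Let $S^1=\{(\cos\phi,\sin\phi,1)\}$. A hyperbolic $g\in\mathrm{SO}^0(2,1)$ has eigenvalues $\lambda<1<\lambda^{-1}$; $x^-(g)$, $x^+(g)$ are the corresponding eigenvectors on $S^1$, and $x^0(g)$ is the eigenvector for $1$ with $\mathbb{B}(x^0(g),x^0(g))=1$ making $(x^-(g),x^+(g),x^0(g))$ positively oriented. $g$ is $\epsilon$-hyperbolic if $\rho(x^+(g),x^-(g))\ge\epsilon$; an affine isometry is $\epsilon$-hyperbolic if its linear part is. $E^{wu}(g)$ is the linear plane spanned by $x^0(g)$ and $x^+(g)$, and $E^{wu}_y(g)=y+E^{wu}(g)$ for $y\in\mathbb{E}$. *)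

theory Defs
  imports "HOL-Analysis.Analysis"
begin

definition Bform :: "real^3 \<Rightarrow> real^3 \<Rightarrow> real" where
  "Bform u v = u$1 * v$1 + u$2 * v$2 - u$3 * v$3"

text \<open>SO^0(2,1): linear maps (matrices) preserving Bform, of determinant 1, and
  preserving time orientation (identity component).\<close>
definition SO0_21 :: "(real^3^3) set" where
  "SO0_21 = {g. (\<forall>u v. Bform (g *v u) (g *v v) = Bform u v) \<and> det g = 1
              \<and> (g *v vector [0,0,1]) $ 3 > 0}"

definition S1 :: "(real^3) set" where
  "S1 = {vector [cos \<phi>, sin \<phi>, 1] | \<phi>. True}"

definition hyperbolic :: "real^3^3 \<Rightarrow> bool" where
  "hyperbolic g \<longleftrightarrow> g \<in> SO0_21 \<and>
     (\<exists>l. 0 < l \<and> l < 1 \<and> (\<exists>v. v \<noteq> 0 \<and> g *v v = l *\<^sub>R v)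
                         \<and> (\<exists>v. v \<noteq> 0 \<and> g *v v = (1/l) *\<^sub>R v))"

definition xminus :: "real^3^3 \<Rightarrow> real^3" where
  "xminus g = (THE x. x \<in> S1 \<and> (\<exists>l. 0 < l \<and> l < 1 \<and> g *v x = l *\<^sub>R x))"

definition xplus :: "real^3^3 \<Rightarrow> real^3" where
  "xplus g = (THE x. x \<in> S1 \<and> (\<exists>l. 1 < l \<and> g *v x = l *\<^sub>R x))"

definition xzero :: "real^3^3 \<Rightarrow> real^3" where
  "xzero g = (THE x. g *v x = x \<and> Bform x x = 1 \<and>
                     det (vector [xminus g, xplus g, x] :: real^3^3) > 0)"

definition eps_hyperbolic :: "real \<Rightarrow> real^3^3 \<Rightarrow> bool" where
  "eps_hyperbolic \<epsilon> g \<longleftrightarrow> hyperbolic g \<and> dist (xplus g) (xminus g) \<ge> \<epsilon>"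

definition Ewu :: "real^3^3 \<Rightarrow> (real^3) set" where
  "Ewu g = span {xzero g, xplus g}"

definition Ewu_at :: "real^3 \<Rightarrow> real^3^3 \<Rightarrow> (real^3) set" where
  "Ewu_at y g = (\<lambda>v. y + v) ` Ewu g"

end

theory Submission imports Defs begin

text \<open>On \<open>E\<^sup>w\<^sup>u(g)\<close> the linear part fixes \<open>x\<^sup>0\<close> and stretches \<open>x\<^sup>+\<close> by \<open>1/\<lambda>\<close>, so the
  preimage of \<open>h x + a x\<^sup>0 + c x\<^sup>+\<close> is \<open>x + a x\<^sup>0 + \<lambda> c x\<^sup>+\<close> and it suffices to compare
  Euclidean norms in that plane. With \<open>t\<close> the last coordinate of \<open>x\<^sup>0\<close>, the squared norm of
  \<open>a x\<^sup>0 + k x\<^sup>+\<close> is \<open>a\<^sup>2 + 2 (a t + k)\<^sup>2\<close>, which is convex in \<open>k\<close>; since \<open>x\<^sup>0\<close> is the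
  Lorentz-unit normal of \<open>x\<^sup>+, x\<^sup>-\<close>, one has \<open>\<rho>(x\<^sup>+, x\<^sup>-)\<^sup>2 (1 + t\<^sup>2) = 4\<close>, so \<open>\<epsilon>\<close> bounds both
  \<open>2\<close> and \<open>2 / \<bar>t\<bar>\<close>, and shrinking \<open>k\<close> to \<open>\<lambda> k\<close> costs at most the factor \<open>4 / \<epsilon>\<close>.\<close>

lemma Bform_scaleL [simp]: "Bform (a *\<^sub>R u) v = a * Bform u v"
  by (simp add: Bform_def algebra_simps)

lemma Bform_scaleR [simp]: "Bform u (a *\<^sub>R v) = a * Bform u v"
  by (simp add: Bform_def algebra_simps)

lemma SO0_21_Bform: "g \<in> SO0_21 \<Longrightarrow> Bform (g *v u) (g *v v) = Bform u v"
  by (simp add: SO0_21_def)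

lemma norm_sq_vec3: "(norm (v::real^3))\<^sup>2 = (v$1)\<^sup>2 + (v$2)\<^sup>2 + (v$3)\<^sup>2"
  unfolding power2_norm_eq_inner by (simp add: inner_vec_def sum_3 power2_eq_square)

lemma mem_S1_iff: "x \<in> S1 \<longleftrightarrow> x$3 = 1 \<and> (x$1)\<^sup>2 + (x$2)\<^sup>2 = 1"
proof
  assume "x \<in> S1"
  then show "x$3 = 1 \<and> (x$1)\<^sup>2 + (x$2)\<^sup>2 = 1"
    by (auto simp: S1_def)
next
  assume x: "x$3 = 1 \<and> (x$1)\<^sup>2 + (x$2)\<^sup>2 = 1"
  then obtain t where "x$1 = cos t" "x$2 = sin t"
    using sincos_total_2pi by metis
  then have "x = vector [cos t, sin t, 1]"
    using x by (simp add: vec_eq_iff forall_3)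
  then show "x \<in> S1" by (auto simp: S1_def)
qed

lemma dist_sq_S1:
  assumes "p \<in> S1" "q \<in> S1"
  shows "(dist p q)\<^sup>2 = (p$1 - q$1)\<^sup>2 + (p$2 - q$2)\<^sup>2"
  using assms by (simp add: dist_norm norm_sq_vec3 mem_S1_iff)

lemma dist_sq_S1_le_4:
  assumes "p \<in> S1" "q \<in> S1"
  shows "(dist p q)\<^sup>2 \<le> 4"
proof -
  have "(dist p q)\<^sup>2 + ((p$1 + q$1)\<^sup>2 + (p$2 + q$2)\<^sup>2) = 4"
    using assms by (simp add: dist_sq_S1 mem_S1_iff) algebra
  then show ?thesis
    using zero_le_power2[of "p$1 + q$1"] zero_le_power2[of "p$2 + q$2"] by linarith
qed

text \<open>On \<open>S1\<close>, \<open>-2 * Bform x y\<close> is the squared Euclidean distance.\<close>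
lemma S1_eq_if_Bform_zero:
  assumes "x \<in> S1" "y \<in> S1" "Bform x y = 0"
  shows "x = y"
proof -
  have "(dist x y)\<^sup>2 = -2 * Bform x y"
    using assms by (simp add: dist_sq_S1 mem_S1_iff Bform_def) algebra
  then show ?thesis using assms(3) by simp
qed

lemma SO0_21_eigenvectors_Bform_orthogonal:
  assumes "g \<in> SO0_21" "g *v x = a *\<^sub>R x" "g *v y = b *\<^sub>R y" "a * b \<noteq> 1"
  shows "Bform x y = 0"
proof -
  have "Bform (g *v x) (g *v y) = a * b * Bform x y"
    using assms(2,3) by simp
  then have "Bform x y = a * b * Bform x y"
    using SO0_21_Bform[OF assms(1), of x y] by simp
  then have "(1 - a * b) * Bform x y = 0" by algebra
  then show ?thesis using assms(4) by simp
qed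

lemma SO0_21_eigenvector_in_S1:
  assumes g: "g \<in> SO0_21" and v: "v \<noteq> 0" "g *v v = m *\<^sub>R v" and m: "m > 0" "m \<noteq> 1"
  shows "\<exists>x\<in>S1. g *v x = m *\<^sub>R x"
proof -
  have "m * m \<noteq> 1"
  proof
    assume "m * m = 1"
    then have "(m - 1) * (m + 1) = 0" by algebra
    then show False using m by simp
  qed
  then have null: "Bform v v = 0"
    using SO0_21_eigenvectors_Bform_orthogonal[OF g v(2) v(2)] by blast
  then have v12: "(v$1)\<^sup>2 + (v$2)\<^sup>2 = (v$3)\<^sup>2"
    by (simp add: Bform_def power2_eq_square)
  have v3: "v$3 \<noteq> 0"
  proof
    assume "v$3 = 0"
    then have "v$1 = 0" "v$2 = 0" using v12 by simp_all
    then show False using v(1) \<open>v$3 = 0\<close> by (simp add: vec_eq_iff forall_3)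
  qed
  define x where "x = (1 / v$3) *\<^sub>R v"
  have "x \<in> S1"
    using v3 v12 by (simp add: mem_S1_iff x_def power_divide add_divide_distrib[symmetric])
  moreover have "g *v x = m *\<^sub>R x"
    by (simp add: x_def matrix_vector_mult_scaleR v(2))
  ultimately show ?thesis by blast
qed

text \<open>Uniqueness in \<open>xplus\<close>, \<open>xminus\<close>: eigenvectors in \<open>S1\<close> whose eigenvalues have
  product \<open>\<noteq> 1\<close> are \<open>Bform\<close>-orthogonal, hence equal.\<close>
lemma hyperbolic_eigenvectors:
  assumes "hyperbolic g"
  obtains l where "0 < l" "l < 1"
    "xplus g \<in> S1" "g *v xplus g = (1/l) *\<^sub>R xplus g"
    "xminus g \<in> S1" "g *v xminus g = l *\<^sub>R xminus g"
proof -
  from assms obtain l v w where g: "g \<in> SO0_21" and l: "0 < l" "l < 1"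
    and v: "v \<noteq> 0" "g *v v = l *\<^sub>R v" and w: "w \<noteq> 0" "g *v w = (1/l) *\<^sub>R w"
    unfolding hyperbolic_def by blast
  obtain p where p: "p \<in> S1" "g *v p = (1/l) *\<^sub>R p"
    using SO0_21_eigenvector_in_S1[OF g w] l by auto
  obtain q where q: "q \<in> S1" "g *v q = l *\<^sub>R q"
    using SO0_21_eigenvector_in_S1[OF g v] l by auto
  have "xplus g = p" unfolding xplus_def
  proof (rule the_equality)
    show "p \<in> S1 \<and> (\<exists>m>1. g *v p = m *\<^sub>R p)"
      using p l by (auto intro!: exI[of _ "1/l"])
  next
    fix z assume "z \<in> S1 \<and> (\<exists>m>1. g *v z = m *\<^sub>R z)"
    then obtain m where z: "z \<in> S1" "m > 1" "g *v z = m *\<^sub>R z" by auto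
    have "m * (1/l) > 1" using z(2) l by (intro less_1_mult) auto
    then have "Bform z p = 0"
      using SO0_21_eigenvectors_Bform_orthogonal[OF g z(3) p(2)] by (metis less_irrefl)
    then show "z = p" using S1_eq_if_Bform_zero z(1) p(1) by blast
  qed
  moreover have "xminus g = q" unfolding xminus_def
  proof (rule the_equality)
    show "q \<in> S1 \<and> (\<exists>m. 0 < m \<and> m < 1 \<and> g *v q = m *\<^sub>R q)"
      using q l by auto
  next
    fix z assume "z \<in> S1 \<and> (\<exists>m. 0 < m \<and> m < 1 \<and> g *v z = m *\<^sub>R z)"
    then obtain m where z: "z \<in> S1" "0 < m" "m < 1" "g *v z = m *\<^sub>R z" by auto
    have "m * l < 1 * 1" using z l by (intro mult_strict_mono) auto
    then have "Bform z q = 0"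
      using SO0_21_eigenvectors_Bform_orthogonal[OF g z(4) q(2)] by (metis less_irrefl mult_1)
    then show "z = q" using S1_eq_if_Bform_zero z(1) q(1) by blast
  qed
  ultimately show ?thesis using that l p q by auto
qed

lemma hyperbolic_xplus_ne_xminus:
  assumes "hyperbolic g"
  shows "xplus g \<noteq> xminus g"
proof
  assume eq: "xplus g = xminus g"
  obtain l where l: "0 < l" "l < 1" and p: "xplus g \<in> S1" "g *v xplus g = (1/l) *\<^sub>R xplus g"
    and q: "g *v xminus g = l *\<^sub>R xminus g"
    using hyperbolic_eigenvectors[OF assms] by metis
  have "xplus g \<noteq> 0" using p(1) by (auto simp: mem_S1_iff)
  then have "1/l = l" using p(2) q eq by (metis scaleR_cancel_right)
  then have "l * l = 1" using l by (simp add: field_simps)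
  moreover have "l * l < 1 * 1" using l by (intro mult_strict_mono) auto
  ultimately show False by simp
qed

text \<open>The Euclidean cross product with its last coordinate negated: it is
  \<open>Bform\<close>-orthogonal to both factors.\<close>
definition lorentz_cross :: "real^3 \<Rightarrow> real^3 \<Rightarrow> real^3" where
  "lorentz_cross p q =
     vector [p$2*q$3 - p$3*q$2, p$3*q$1 - p$1*q$3, -(p$1*q$2 - p$2*q$1)]"

lemma Bform_lorentz_cross_left: "Bform (lorentz_cross p q) p = 0"
  and Bform_lorentz_cross_right: "Bform (lorentz_cross p q) q = 0"
  by (simp_all add: Bform_def lorentz_cross_def algebra_simps)

lemma Bform_orthogonal_lorentz_cross:
  assumes "Bform y p = 0" "Bform y q = 0"
  shows "Bform (lorentz_cross p q) (lorentz_cross p q) *\<^sub>R y = Bform y (lorentz_cross p q) *\<^sub>R lorentz_cross p q"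
  using assms unfolding Bform_def lorentz_cross_def
  by (simp add: vec_eq_iff forall_3) algebra

lemma det_rows_lorentz_cross: "det (vector [q, p, y] :: real^3^3) = - Bform y (lorentz_cross p q)"
  by (simp add: det_3 Bform_def lorentz_cross_def algebra_simps)

lemma Bform_lorentz_cross_S1:
  assumes "p \<in> S1" "q \<in> S1"
  shows "Bform (lorentz_cross p q) (lorentz_cross p q) = (dist p q)^4 / 4"
proof -
  have "4 * Bform (lorentz_cross p q) (lorentz_cross p q) = ((dist p q)\<^sup>2)\<^sup>2"
    using assms unfolding dist_sq_S1[OF assms] Bform_def lorentz_cross_def mem_S1_iff
    by simp algebra
  then show ?thesis by simp
qed

lemma scaleR_eq_imp_eq_divide_scaleR:
  fixes y n :: "'a::real_vector"
  assumes "k \<noteq> 0" "k *\<^sub>R y = c *\<^sub>R n"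
  shows "y = (c / k) *\<^sub>R n"
proof -
  have "y = (1/k) *\<^sub>R (k *\<^sub>R y)" using assms(1) by simp
  also have "\<dots> = (c / k) *\<^sub>R n" unfolding assms(2) by simp
  finally show ?thesis .
qed

lemma rows_mult_transpose:
  "(vector [x, y, z] :: real^3^3) ** transpose A = (vector [A *v x, A *v y, A *v z] :: real^3^3)"
  unfolding vec_eq_iff matrix_matrix_mult_def matrix_vector_mult_def transpose_def
  by (simp add: sum_3 forall_3)

lemma det_rows_scaleR:
  "det (vector [a *\<^sub>R x, b *\<^sub>R y, c *\<^sub>R z] :: real^3^3) = a * b * c * det (vector [x, y, z] :: real^3^3)"
  by (simp add: det_3 algebra_simps)

text \<open>\<open>g\<close> maps \<open>n\<close> to a multiple \<open>\<gamma> n\<close>; comparing determinants of the frame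
  \<open>(q, p, n)\<close> before and after applying \<open>g\<close> forces \<open>\<gamma> = \<mu> \<mu>\<inverse> det g = 1\<close>.\<close>
lemma SO0_21_fixes_lorentz_cross:
  assumes g: "g \<in> SO0_21" and \<mu>: "\<mu> \<noteq> 0"
    and p: "g *v p = \<mu> *\<^sub>R p" and q: "g *v q = (1/\<mu>) *\<^sub>R q"
    and non_null: "Bform (lorentz_cross p q) (lorentz_cross p q) \<noteq> 0"
  shows "g *v lorentz_cross p q = lorentz_cross p q"
proof -
  define n where "n = lorentz_cross p q"
  define K where "K = Bform n n"
  have K: "K \<noteq> 0" using non_null by (simp add: K_def n_def)
  have "\<mu> * Bform (g *v n) p = Bform n p"
    using SO0_21_Bform[OF g, of n p] p by simp
  then have np: "Bform (g *v n) p = 0" using \<mu> by (simp add: n_def Bform_lorentz_cross_left)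
  have "(1/\<mu>) * Bform (g *v n) q = Bform n q"
    using SO0_21_Bform[OF g, of n q] q by simp
  then have nq: "Bform (g *v n) q = 0" using \<mu> by (simp add: n_def Bform_lorentz_cross_right)
  from np nq have "K *\<^sub>R (g *v n) = Bform (g *v n) n *\<^sub>R n"
    using Bform_orthogonal_lorentz_cross K_def n_def by simp
  then obtain \<gamma> where gn: "g *v n = \<gamma> *\<^sub>R n"
    using K scaleR_eq_imp_eq_divide_scaleR by metis
  define M where "M = (vector [q, p, n] :: real^3^3)"
  have detM: "det M = - K"
    unfolding M_def K_def n_def det_rows_lorentz_cross ..
  have "M ** transpose g = (vector [(1/\<mu>) *\<^sub>R q, \<mu> *\<^sub>R p, \<gamma> *\<^sub>R n] :: real^3^3)"
    unfolding M_def rows_mult_transpose using p q gn by simp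
  then have "det M * det g = (1/\<mu>) * \<mu> * \<gamma> * det M"
    using det_mul det_transpose det_rows_scaleR M_def by metis
  moreover have "det g = 1" using g by (simp add: SO0_21_def)
  ultimately have "\<gamma> = 1" using \<mu> detM K by simp
  then show ?thesis using gn n_def by simp
qed

lemma Bform_unit_normal_eq:
  fixes p q :: "real^3"
  defines "n \<equiv> lorentz_cross p q"
  assumes y: "Bform y p = 0" "Bform y q = 0" "Bform y y = 1"
    and K: "Bform n n > 0" and neg: "Bform y n < 0"
  shows "y = (- 1 / sqrt (Bform n n)) *\<^sub>R n"
proof -
  define K where "K = Bform n n"
  define \<beta> where "\<beta> = Bform y n"
  have Ky: "K *\<^sub>R y = \<beta> *\<^sub>R n"
    using Bform_orthogonal_lorentz_cross[OF y(1,2)] by (simp add: K_def \<beta>_def n_def)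
  have "K * (K * Bform y y) = \<beta> * (\<beta> * K)"
    using arg_cong2[OF Ky Ky, of Bform] by (simp add: K_def)
  then have "K * K = (\<beta> * \<beta>) * K" using y(3) by (simp only: mult_1_right mult.assoc)
  then have "\<beta>\<^sup>2 = K" using K K_def by (simp add: power2_eq_square)
  then have "sqrt K = \<bar>\<beta>\<bar>" by (metis real_sqrt_abs)
  then have "\<beta> = - sqrt K" using neg \<beta>_def by simp
  then have "K *\<^sub>R y = (- sqrt K) *\<^sub>R n" using Ky by simp
  then have "y = (- sqrt K / K) *\<^sub>R n"
    using K K_def by (intro scaleR_eq_imp_eq_divide_scaleR) auto
  moreover have "- sqrt K / K = - 1 / sqrt K"
    using K K_def real_sqrt_mult_self[of K] by (simp add: field_simps)
  ultimately show ?thesis by (simp add: K_def)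
qed

lemma Bform_normalized:
  assumes "Bform v v > 0"
  shows "Bform ((- 1 / sqrt (Bform v v)) *\<^sub>R v) ((- 1 / sqrt (Bform v v)) *\<^sub>R v) = 1"
proof -
  define c where "c = - 1 / sqrt (Bform v v)"
  have "c * c = 1 / Bform v v"
    using assms by (simp add: c_def)
  moreover have "Bform (c *\<^sub>R v) (c *\<^sub>R v) = (c * c) * Bform v v"
    by simp
  ultimately have "Bform (c *\<^sub>R v) (c *\<^sub>R v) = 1"
    using assms by simp
  then show ?thesis by (simp only: c_def)
qed

lemma hyperbolic_lorentz_cross:
  assumes "hyperbolic g"
  defines "n \<equiv> lorentz_cross (xplus g) (xminus g)"
  shows "Bform n n > 0" "g *v n = n"
proof -
  obtain l where l: "0 < l" "l < 1"
    and p: "xplus g \<in> S1" "g *v xplus g = (1/l) *\<^sub>R xplus g"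
    and q: "xminus g \<in> S1" "g *v xminus g = l *\<^sub>R xminus g"
    using hyperbolic_eigenvectors[OF assms(1)] by metis
  have "(dist (xplus g) (xminus g))^4 > 0"
    using hyperbolic_xplus_ne_xminus[OF assms(1)] by simp
  then show K: "Bform n n > 0"
    using Bform_lorentz_cross_S1[OF p(1) q(1)] unfolding n_def by linarith
  have "g \<in> SO0_21" using assms(1) by (simp add: hyperbolic_def)
  then show "g *v n = n"
    using SO0_21_fixes_lorentz_cross[of g "1/l"] p(2) q(2) K l by (simp add: n_def)
qed

lemma hyperbolic_xzero_eq:
  assumes "hyperbolic g"
  defines "n \<equiv> lorentz_cross (xplus g) (xminus g)"
  shows "xzero g = (- 1 / sqrt (Bform n n)) *\<^sub>R n"
proof -
  obtain l where l: "0 < l" "l < 1"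
    and p: "g *v xplus g = (1/l) *\<^sub>R xplus g" and q: "g *v xminus g = l *\<^sub>R xminus g"
    using hyperbolic_eigenvectors[OF assms(1)] by metis
  have g: "g \<in> SO0_21" using assms(1) by (simp add: hyperbolic_def)
  define c where "c = - 1 / sqrt (Bform n n)"
  have K: "Bform n n > 0" and gn: "g *v n = n"
    using hyperbolic_lorentz_cross[OF assms(1)] by (simp_all add: n_def)
  have "c < 0" using K by (simp add: c_def)
  have "g *v (c *\<^sub>R n) = c *\<^sub>R n"
    by (simp only: matrix_vector_mult_scaleR gn)
  moreover have "Bform (c *\<^sub>R n) (c *\<^sub>R n) = 1"
    using Bform_normalized[OF K] by (simp only: c_def)
  moreover have "det (vector [xminus g, xplus g, c *\<^sub>R n] :: real^3^3) > 0"
    using K \<open>c < 0\<close> by (simp add: det_rows_lorentz_cross n_def[symmetric] mult_neg_pos)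
  moreover have "y = c *\<^sub>R n"
    if y: "g *v y = y" "Bform y y = 1" "det (vector [xminus g, xplus g, y] :: real^3^3) > 0" for y
  proof -
    have "g *v y = 1 *\<^sub>R y" using y by simp
    moreover have "1 * (1/l) \<noteq> 1" "1 * l \<noteq> 1" using l by auto
    ultimately have "Bform y (xplus g) = 0" "Bform y (xminus g) = 0"
      using SO0_21_eigenvectors_Bform_orthogonal[OF g] p q by blast+
    moreover have "Bform y n < 0" using y(3) by (simp add: det_rows_lorentz_cross n_def)
    ultimately show ?thesis
      using Bform_unit_normal_eq K y(2) by (simp add: c_def n_def)
  qed
  ultimately have "xzero g = c *\<^sub>R n"
    unfolding xzero_def by (intro the_equality) blast+
  then show ?thesis by (simp add: c_def)
qed

lemma hyperbolic_xzero:
  assumes "hyperbolic g"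
  shows "g *v xzero g = xzero g" "Bform (xzero g) (xzero g) = 1"
    "Bform (xzero g) (xplus g) = 0" "Bform (xzero g) (xminus g) = 0"
proof -
  define n where "n = lorentz_cross (xplus g) (xminus g)"
  define c where "c = - 1 / sqrt (Bform n n)"
  have X: "xzero g = c *\<^sub>R n"
    using hyperbolic_xzero_eq[OF assms] by (simp add: c_def n_def)
  have K: "Bform n n > 0" and gn: "g *v n = n"
    using hyperbolic_lorentz_cross[OF assms] by (simp_all add: n_def)
  show "g *v xzero g = xzero g"
    unfolding X by (simp only: matrix_vector_mult_scaleR gn)
  show "Bform (xzero g) (xzero g) = 1"
    using Bform_normalized[OF K] by (simp only: X c_def)
  show "Bform (xzero g) (xplus g) = 0" "Bform (xzero g) (xminus g) = 0"
    by (simp_all add: X n_def Bform_lorentz_cross_left Bform_lorentz_cross_right)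
qed

lemma span_pairE:
  fixes u v w :: "'a::real_vector"
  assumes "w \<in> span {u, v}"
  obtains a c where "w = a *\<^sub>R u + c *\<^sub>R v"
proof -
  obtain a c where "w - a *\<^sub>R u = c *\<^sub>R v"
    using assms by (auto simp: span_breakdown_eq span_singleton)
  then show ?thesis using that by (metis add.commute diff_add_cancel)
qed

lemma norm_sq_plane_S1:
  assumes "p \<in> S1" "Bform x p = 0" "Bform x x = 1"
  shows "(norm (a *\<^sub>R x + k *\<^sub>R p))\<^sup>2 = a\<^sup>2 + 2 * (a * x$3 + k)\<^sup>2"
  using assms unfolding norm_sq_vec3 mem_S1_iff Bform_def
  by (simp add: power2_eq_square) algebra

lemma dist_sq_mult_height_le:
  assumes "p \<in> S1" "q \<in> S1" "Bform x p = 0" "Bform x q = 0" "Bform x x = 1"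
  shows "(dist p q)\<^sup>2 * (x$3)\<^sup>2 \<le> 4"
proof -
  define D where "D = (dist p q)\<^sup>2"
  have "D * (D * (x$3)\<^sup>2 + D - 4) = 0"
    using assms unfolding D_def dist_sq_S1[OF assms(1,2)] mem_S1_iff Bform_def
    by (simp add: power2_eq_square) algebra
  moreover have "D \<ge> 0" by (simp add: D_def)
  ultimately show ?thesis unfolding D_def[symmetric] by (cases "D = 0") auto
qed

lemma convex_comb_sq_le:
  fixes u w s :: real
  assumes "0 \<le> s" "s \<le> 1"
  shows "(u + s * (w - u))\<^sup>2 \<le> u\<^sup>2 + w\<^sup>2"
proof -
  have "(1 - s) * u\<^sup>2 + s * w\<^sup>2 - (u + s * (w - u))\<^sup>2 = s * (1 - s) * (w - u)\<^sup>2"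
    by algebra
  moreover have "s * (1 - s) * (w - u)\<^sup>2 \<ge> 0" using assms by simp
  moreover have "(1 - s) * u\<^sup>2 \<le> u\<^sup>2" "s * w\<^sup>2 \<le> w\<^sup>2"
    using assms by (simp_all add: mult_left_le_one_le)
  ultimately show ?thesis by linarith
qed

lemma dist_mult_norm_shrink_le:
  assumes "p \<in> S1" "q \<in> S1" "Bform x p = 0" "Bform x q = 0" "Bform x x = 1"
    and s: "0 \<le> s" "s \<le> 1"
  shows "dist p q * norm (a *\<^sub>R x + (s * k) *\<^sub>R p) \<le> 4 * norm (a *\<^sub>R x + k *\<^sub>R p)"
proof -
  define d where "d = dist p q"
  define t where "t = x$3"
  have d4: "d\<^sup>2 \<le> 4" using dist_sq_S1_le_4[OF assms(1,2)] by (simp add: d_def)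
  have "d\<^sup>2 * (a * t)\<^sup>2 = (d\<^sup>2 * t\<^sup>2) * a\<^sup>2"
    by (simp add: power_mult_distrib)
  also have "\<dots> \<le> 4 * a\<^sup>2"
    using dist_sq_mult_height_le[OF assms(1-5)] by (intro mult_right_mono) (simp_all add: d_def t_def)
  finally have height: "d\<^sup>2 * (a * t)\<^sup>2 \<le> 4 * a\<^sup>2" .
  have "(a * t + s * k)\<^sup>2 \<le> (a * t)\<^sup>2 + (a * t + k)\<^sup>2"
    using convex_comb_sq_le[OF s, of "a * t" "a * t + k"] by (simp add: algebra_simps)
  then have "d\<^sup>2 * (a * t + s * k)\<^sup>2 \<le> d\<^sup>2 * (a * t)\<^sup>2 + d\<^sup>2 * (a * t + k)\<^sup>2"
    using mult_left_mono[of _ _ "d\<^sup>2"] by (simp add: distrib_left[symmetric])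
  with height have "d\<^sup>2 * (a\<^sup>2 + 2 * (a * t + s * k)\<^sup>2) \<le> d\<^sup>2 * a\<^sup>2 + 8 * a\<^sup>2 + 2 * (d\<^sup>2 * (a * t + k)\<^sup>2)"
    by (simp add: distrib_left)
  also have "\<dots> \<le> 16 * (a\<^sup>2 + 2 * (a * t + k)\<^sup>2)"
  proof -
    have lin: "P + 8 * A + 2 * Q \<le> 16 * (A + 2 * W)"
      if "P \<le> 4 * A" "Q \<le> 4 * W" "0 \<le> A" "0 \<le> W" for P Q A W :: real
    proof -
      have "16 * (A + 2 * W) = 16 * A + 32 * W" by simp
      then show ?thesis using that by linarith
    qed
    show ?thesis
      by (rule lin[OF mult_right_mono[OF d4 zero_le_power2] mult_right_mono[OF d4 zero_le_power2]
            zero_le_power2 zero_le_power2])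
  qed
  finally have "(d * norm (a *\<^sub>R x + (s * k) *\<^sub>R p))\<^sup>2 \<le> (4 * norm (a *\<^sub>R x + k *\<^sub>R p))\<^sup>2"
    by (simp add: power_mult_distrib norm_sq_plane_S1[OF assms(1,3,5)] t_def)
  then show ?thesis
    unfolding d_def by (rule power2_le_imp_le) simp
qed

lemma hyperbolic_Ewu_preimage:
  assumes hyp: "hyperbolic g" and w: "w \<in> Ewu g"
  obtains v where "g *v v = w" "dist (xplus g) (xminus g) * norm v \<le> 4 * norm w"
proof -
  obtain l where l: "0 < l" "l < 1" and p: "xplus g \<in> S1" "g *v xplus g = (1/l) *\<^sub>R xplus g"
    and q: "xminus g \<in> S1"
    using hyperbolic_eigenvectors[OF hyp] by metis
  obtain a c where ac: "w = a *\<^sub>R xzero g + c *\<^sub>R xplus g"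
    using w unfolding Ewu_def by (rule span_pairE)
  define v where "v = a *\<^sub>R xzero g + (l * c) *\<^sub>R xplus g"
  have "g *v v = w"
    using l hyperbolic_xzero(1)[OF hyp] p(2)
    by (simp add: ac v_def matrix_vector_right_distrib matrix_vector_mult_scaleR)
  moreover have "dist (xplus g) (xminus g) * norm v \<le> 4 * norm w"
    using dist_mult_norm_shrink_le[OF p(1) q hyperbolic_xzero(3,4,2)[OF hyp], of l a c] l
    by (simp add: ac v_def)
  ultimately show ?thesis by (rule that)
qed

theorem mainTheorem4:
  fixes \<epsilon> :: real and g :: "real^3^3" and b :: "real^3" and h :: "real^3 \<Rightarrow> real^3"
  assumes "\<epsilon> > 0"
    and "g \<in> SO0_21"
    and "h = (\<lambda>x. g *v x + b)"
    and "eps_hyperbolic \<epsilon> g"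
  shows "\<forall>\<delta>>0. \<forall>x. ball (h x) (\<delta> * \<epsilon> / 4) \<inter> Ewu_at (h x) g \<subseteq> h ` ball x \<delta>"
proof (intro allI impI subsetI)
  fix \<delta> :: real and x y
  assume y: "y \<in> ball (h x) (\<delta> * \<epsilon> / 4) \<inter> Ewu_at (h x) g"
  have hyp: "hyperbolic g" and \<epsilon>: "\<epsilon> \<le> dist (xplus g) (xminus g)"
    using assms(4) by (auto simp: eps_hyperbolic_def)
  have "y - h x \<in> Ewu g"
    using y by (auto simp: Ewu_at_def)
  then obtain v where v: "g *v v = y - h x"
    and bound: "dist (xplus g) (xminus g) * norm v \<le> 4 * norm (y - h x)"
    by (rule hyperbolic_Ewu_preimage[OF hyp])
  have "\<epsilon> * norm v \<le> dist (xplus g) (xminus g) * norm v"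
    using \<epsilon> by (simp add: mult_right_mono)
  moreover have "norm (y - h x) < \<delta> * \<epsilon> / 4"
    using y by (simp add: dist_norm norm_minus_commute)
  ultimately have "\<epsilon> * norm v < \<epsilon> * \<delta>"
    using bound mult.commute[of \<delta> \<epsilon>] by linarith
  then have "x + v \<in> ball x \<delta>"
    using assms(1) by (simp add: dist_norm)
  moreover have "h (x + v) = y"
    using v by (simp add: assms(3) matrix_vector_right_distrib)
  ultimately show "y \<in> h ` ball x \<delta>" by blast
qed

end
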